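(* For every integer $n\ge 1$, \[ m-A_m^{n}=0 \quad (m=1,\dots,2n), \qquad (2n+1)-A_{2n+1}^{n}=(-1)^n\frac{(n!)^2}{((2n)!)^2}. \]
   Context: For $n\ge1$ let $y_n(z)=\sum_{k=0}^{n}\frac{(n+k)!}{(n-k)!\,k!}\left(\frac{z}{2}\right)^k$ be the $n$-th Bessel polynomial and let $\alpha_{n1},\dots,\alpha_{nn}$ be its zeros (they are simple). Put $a_{nk}=1-\alpha_{nk}/2$ and $b_{nk}=1+\alpha_{nk}/2$ for $k=1,\dots,n$. For $m\ge1$ define $A_m^{n}=\sum_{k=1}^n\big(a_{nk}^m-b_{nk}^m\big)$. *)

theory Defs
  imports "HOL-Computational_Algebra.Polynomial" Complex_Main
begin

definition bessel_poly :: "nat \<Rightarrow> complex poly" where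
  "bessel_poly n = (\<Sum>k=0..n. monom (of_nat (fact (n+k)) / (of_nat (fact (n-k)) * of_nat (fact k)) / 2 ^ k) k)"

text \<open>The set of zeros of y_n (they are simple, so this set lists alpha_{n1},...,alpha_{nn}).\<close>
definition bessel_zeros :: "nat \<Rightarrow> complex set" where
  "bessel_zeros n = {z. poly (bessel_poly n) z = 0}"

definition A_sum :: "nat \<Rightarrow> nat \<Rightarrow> complex" where
  "A_sum m n = (\<Sum>\<alpha>\<in>bessel_zeros n. (1 - \<alpha>/2) ^ m - (1 + \<alpha>/2) ^ m)"

end

theory Submission
  imports Defs "HOL-Computational_Algebra.Fundamental_Theorem_Algebra" "HOL-Computational_Algebra.Polynomial_FPS"
begin

text \<open>
  The Bessel polynomial \<open>y = y\<^sub>n\<close> satisfies \<open>z\<^sup>2 y'' + 2(z + 1) y' = n(n + 1) y\<close>, so the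
  quantity \<open>z\<^sup>2 (y'(z) y(-z) + y'(-z) y(z)) + 2 y(z) y(-z)\<close> has zero derivative and equals 2.
  Hence the zeros are simple, and writing \<open>y = c \<Prod>(z - \<alpha>)\<close> this becomes
  \<open>\<Prod>(\<beta>\<^sup>2 - z\<^sup>2) - z\<^sup>2 \<Sum>\<^sub>\<alpha> \<alpha> \<Prod>\<^sub>\<beta>\<^sub>\<noteq>\<^sub>\<alpha> (\<beta>\<^sup>2 - z\<^sup>2) = 1/c\<^sup>2\<close>. In the variable
  \<open>u = 1/z\<^sup>2\<close> it reads \<open>T(u) (1 + \<Sum>\<^sub>j p\<^sub>j u\<^sup>j) = u\<^sup>n/c\<^sup>2\<close> with \<open>T(u) = \<Prod>(\<beta>\<^sup>2 u - 1)\<close> and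
  the odd power sums \<open>p\<^sub>j = \<Sum> \<alpha>\<^sup>2\<^sup>j\<^sup>+\<^sup>1\<close>, so \<open>p\<^sub>0 = -1\<close>, \<open>p\<^sub>j = 0\<close> for \<open>0 < j < n\<close> and
  \<open>p\<^sub>n = (-1)\<^sup>n/c\<^sup>2\<close>. Binomial expansion gives \<open>A\<^sub>m\<^sup>n = -\<Sum>\<^sub>j (m choose 2j+1) p\<^sub>j / 4\<^sup>j\<close>,
  and \<open>c\<^sup>2 4\<^sup>n = ((2n)!/n!)\<^sup>2\<close>.
\<close>

unbundle fps_syntax

definition bessel_coeff :: "nat \<Rightarrow> nat \<Rightarrow> complex" where
  "bessel_coeff n k = of_nat (fact (n + k)) / (of_nat (fact (n - k)) * of_nat (fact k)) / 2 ^ k"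

lemma coeff_bessel_poly: "coeff (bessel_poly n) k = (if k \<le> n then bessel_coeff n k else 0)"
  unfolding bessel_poly_def bessel_coeff_def by (simp add: coeff_sum)

lemma bessel_coeff_nonzero: "bessel_coeff n k \<noteq> 0"
  unfolding bessel_coeff_def by simp

lemma bessel_coeff_Suc:
  assumes "k < n"
  shows "2 * of_nat (k + 1) * bessel_coeff n (k + 1)
           = (of_nat n - of_nat k) * (of_nat n + of_nat k + 1) * bessel_coeff n k"
proof -
  obtain j where j: "n - k = Suc j" "n - (k + 1) = j"
    using assms by (metis Suc_diff_Suc Suc_eq_plus1)
  have n_minus_k: "(of_nat n - of_nat k :: complex) = of_nat (Suc j)"
    using assms j by (simp add: of_nat_diff[symmetric])
  define F :: complex where "F = of_nat (fact (n + k))"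
  define J :: complex where "J = of_nat (fact j)"
  define K :: complex where "K = of_nat (fact k)"
  have nonzero: "F \<noteq> 0" "J \<noteq> 0" "K \<noteq> 0" "(of_nat (k + 1) :: complex) \<noteq> 0"
    "(of_nat (Suc j) :: complex) \<noteq> 0"
    unfolding F_def J_def K_def by (simp_all del: of_nat_Suc)
  have "fact (n + (k + 1)) = (n + k + 1) * (fact (n + k) :: nat)"
    by (simp add: algebra_simps)
  then have Suc_k: "bessel_coeff n (k + 1) = of_nat (n + k + 1) * F / (J * (of_nat (k + 1) * K)) / 2 ^ (k + 1)"
    unfolding bessel_coeff_def j F_def J_def K_def by (simp add: algebra_simps)
  have k: "bessel_coeff n k = F / (of_nat (Suc j) * J * K) / 2 ^ k"
    unfolding bessel_coeff_def j F_def J_def K_def by (simp add: algebra_simps)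
  show ?thesis unfolding Suc_k k n_minus_k using nonzero
    by (simp add: field_simps del: of_nat_Suc) (simp add: algebra_simps)
qed

lemma coeff_bessel_poly_Suc:
  "2 * of_nat (k + 1) * coeff (bessel_poly n) (k + 1)
     = (of_nat n - of_nat k) * (of_nat n + of_nat k + 1) * coeff (bessel_poly n) k"
proof (cases "k < n")
  case True
  then show ?thesis using bessel_coeff_Suc[OF True] by (simp add: coeff_bessel_poly)
next
  case False
  then show ?thesis by (cases "k = n") (auto simp: coeff_bessel_poly)
qed

lemma bessel_poly_ode:
  fixes n :: nat
  defines "y \<equiv> bessel_poly n"
  shows "monom 1 2 * pderiv (pderiv y) + smult 2 (pCons 0 (pderiv y)) + smult 2 (pderiv y)
           = smult (of_nat (n * (n + 1))) y"
proof (rule poly_eqI)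
  fix k
  have second: "coeff (monom 1 2 * pderiv (pderiv y)) k = of_nat k * (of_nat k - 1) * coeff y k"
  proof (cases "k < 2")
    case True
    then have "k = 0 \<or> k = 1" by auto
    then show ?thesis by (auto simp: coeff_monom_mult)
  next
    case False
    then obtain j where "k = Suc (Suc j)" by (metis add_2_eq_Suc le_add_diff_inverse not_less)
    then show ?thesis by (simp add: coeff_monom_mult coeff_pderiv)
  qed
  have shifted: "coeff (pCons 0 (pderiv y)) k = of_nat k * coeff y k"
    by (cases k) (simp_all add: coeff_pderiv)
  show "coeff (monom 1 2 * pderiv (pderiv y) + smult 2 (pCons 0 (pderiv y)) + smult 2 (pderiv y)) k
          = coeff (smult (of_nat (n * (n + 1))) y) k"
    unfolding coeff_add coeff_smult second shifted coeff_pderiv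
    using coeff_bessel_poly_Suc[of k n] by (simp add: y_def algebra_simps)
qed

lemma poly_bessel_poly_ode:
  "z\<^sup>2 * poly (pderiv (pderiv (bessel_poly n))) z + 2 * (z + 1) * poly (pderiv (bessel_poly n)) z
     = of_nat (n * (n + 1)) * poly (bessel_poly n) z"
  using arg_cong[OF bessel_poly_ode[of n], of "\<lambda>p. poly p z"]
  by (simp add: poly_monom algebra_simps)

lemma reflection_invariant_of_ode:
  fixes y :: "'a::field_char_0 poly" and c z :: 'a
  assumes ode: "\<And>z. z\<^sup>2 * poly (pderiv (pderiv y)) z + 2 * (z + 1) * poly (pderiv y) z = c * poly y z"
  shows "z\<^sup>2 * (poly (pderiv y) z * poly y (-z) + poly (pderiv y) (-z) * poly y z)
           + 2 * poly y z * poly y (-z) = 2 * (poly y 0)\<^sup>2"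
proof -
  define y' where "y' = pderiv y"
  define y'' where "y'' = pderiv y'"
  define g where "g = pcompose y [:0, -1:]"
  have g: "poly g x = poly y (-x)" for x
    unfolding g_def by (simp add: poly_pcompose)
  have g': "poly (pderiv g) x = - poly y' (-x)" for x
    unfolding g_def y'_def by (simp add: pderiv_pcompose poly_pcompose pderiv_pCons)
  have g'': "poly (pderiv (pderiv g)) x = poly y'' (-x)" for x
    unfolding g_def y''_def y'_def
    by (simp add: pderiv_pcompose poly_pcompose pderiv_pCons pcompose_uminus pderiv_minus)
  \<comment> \<open>\<open>W\<close> is the left-hand side as a polynomial; its derivative is \<open>y(-x)\<close> times the ODE at \<open>x\<close> minus \<open>y(x)\<close> times the ODE at \<open>-x\<close>.\<close>
  define W where "W = [:0, 0, 1:] * (y' * g - pderiv g * y) + smult 2 (y * g)"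
  have "poly (pderiv W) x = 0" for x
  proof -
    have "poly (pderiv W) x
            = poly y (-x) * (x\<^sup>2 * poly y'' x + 2 * (x + 1) * poly y' x - c * poly y x)
              - poly y x * ((-x)\<^sup>2 * poly y'' (-x) + 2 * (-x + 1) * poly y' (-x) - c * poly y (-x))"
      unfolding W_def
      by (simp add: pderiv_mult pderiv_add pderiv_diff pderiv_smult pderiv_pCons g g' g''
            y'_def[symmetric] y''_def[symmetric] algebra_simps power2_eq_square)
    then show ?thesis
      using ode[of x] ode[of "-x"] unfolding y''_def y'_def by simp
  qed
  then have "pderiv W = 0"
    using poly_all_0_iff_0 by blast
  then obtain h where h: "W = [:h:]"
    using pderiv_iszero by blast
  have "h = 2 * (poly y 0)\<^sup>2"
    using arg_cong[OF h, of "\<lambda>p. poly p 0"] unfolding W_def by (simp add: g power2_eq_square)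
  then have "poly W z = 2 * (poly y 0)\<^sup>2"
    using h by simp
  then show ?thesis
    unfolding W_def by (simp add: g g' y'_def algebra_simps power2_eq_square)
qed

lemma bessel_reflection_identity:
  "z\<^sup>2 * (poly (pderiv (bessel_poly n)) z * poly (bessel_poly n) (-z)
            + poly (pderiv (bessel_poly n)) (-z) * poly (bessel_poly n) z)
     + 2 * poly (bessel_poly n) z * poly (bessel_poly n) (-z) = 2"
proof -
  have "poly (bessel_poly n) 0 = 1"
    by (simp add: poly_0_coeff_0 coeff_bessel_poly bessel_coeff_def)
  then show ?thesis
    using reflection_invariant_of_ode[OF poly_bessel_poly_ode] by simp
qed

lemma degree_bessel_poly: "degree (bessel_poly n) = n"
proof (rule antisym)
  show "degree (bessel_poly n) \<le> n"
    by (rule degree_le) (simp add: coeff_bessel_poly)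
  show "n \<le> degree (bessel_poly n)"
    by (rule le_degree) (simp add: coeff_bessel_poly bessel_coeff_nonzero)
qed

lemma lead_coeff_bessel_poly: "lead_coeff (bessel_poly n) = bessel_coeff n n"
  by (simp add: degree_bessel_poly coeff_bessel_poly)

lemma bessel_poly_nonzero: "bessel_poly n \<noteq> 0"
  using lead_coeff_bessel_poly[of n] bessel_coeff_nonzero[of n n] by auto

lemma finite_bessel_zeros: "finite (bessel_zeros n)"
  unfolding bessel_zeros_def by (rule poly_roots_finite[OF bessel_poly_nonzero])

lemma rsquarefree_bessel_poly: "rsquarefree (bessel_poly n)"
  unfolding rsquarefree_roots
proof (intro allI notI)
  fix a
  assume "poly (bessel_poly n) a = 0 \<and> poly (pderiv (bessel_poly n)) a = 0"
  \<comment> \<open>then the reflection identity reads \<open>0 = 2\<close>\<close>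
  then show False
    using bessel_reflection_identity[of a n] by simp
qed

lemma bessel_poly_factorization:
  "bessel_poly n = smult (bessel_coeff n n) (\<Prod>\<beta>\<in>bessel_zeros n. [:-\<beta>, 1:])"
  using complex_poly_decompose_rsquarefree[OF rsquarefree_bessel_poly[of n]]
  by (simp add: lead_coeff_bessel_poly bessel_zeros_def)

lemma card_bessel_zeros: "card (bessel_zeros n) = n"
  using arg_cong[OF bessel_poly_factorization[of n], of degree]
  by (simp add: degree_bessel_poly degree_prod_sum_eq bessel_coeff_nonzero)

lemma poly_prod_linear_reflect:
  fixes Z :: "'a::comm_ring_1 set"
  shows "poly (\<Prod>\<beta>\<in>Z. [:-\<beta>, 1:]) z * poly (\<Prod>\<beta>\<in>Z. [:-\<beta>, 1:]) (-z)
           = (\<Prod>\<beta>\<in>Z. \<beta>\<^sup>2 - z\<^sup>2)"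
  unfolding poly_prod prod.distrib[symmetric]
  by (rule prod.cong) (simp_all add: algebra_simps power2_eq_square)

lemma poly_pderiv_prod_linear_reflect:
  fixes Z :: "'a::idom set"
  assumes "finite Z"
  defines "q \<equiv> \<Prod>\<beta>\<in>Z. [:-\<beta>, 1:]"
  shows "poly (pderiv q) z * poly q (-z) + poly (pderiv q) (-z) * poly q z
           = -2 * (\<Sum>\<alpha>\<in>Z. \<alpha> * (\<Prod>\<beta>\<in>Z - {\<alpha>}. \<beta>\<^sup>2 - z\<^sup>2))"
proof -
  have q': "poly (pderiv q) x = (\<Sum>\<alpha>\<in>Z. \<Prod>\<beta>\<in>Z - {\<alpha>}. x - \<beta>)" for x
    unfolding q_def by (simp add: pderiv_prod pderiv_pCons poly_prod poly_sum)
  have summand: "(\<Prod>\<beta>\<in>Z - {\<alpha>}. z - \<beta>) * poly q (-z) + (\<Prod>\<beta>\<in>Z - {\<alpha>}. -z - \<beta>) * poly q z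
                = -2 * (\<alpha> * (\<Prod>\<beta>\<in>Z - {\<alpha>}. \<beta>\<^sup>2 - z\<^sup>2))"
    if "\<alpha> \<in> Z" for \<alpha>
  proof -
    have q: "poly q x = (x - \<alpha>) * (\<Prod>\<beta>\<in>Z - {\<alpha>}. x - \<beta>)" for x
      unfolding q_def poly_prod using assms that by (simp add: prod.remove)
    have squares: "(\<Prod>\<beta>\<in>Z - {\<alpha>}. \<beta>\<^sup>2 - z\<^sup>2)
                     = (\<Prod>\<beta>\<in>Z - {\<alpha>}. z - \<beta>) * (\<Prod>\<beta>\<in>Z - {\<alpha>}. -z - \<beta>)"
      unfolding prod.distrib[symmetric]
      by (rule prod.cong) (simp_all add: algebra_simps power2_eq_square)
    show ?thesis
      unfolding q squares by (simp add: algebra_simps)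
  qed
  show ?thesis
    unfolding q' sum_distrib_right sum.distrib[symmetric] sum_distrib_left
    using summand by (simp add: mult.commute)
qed

lemma bessel_zeros_identity:
  "(\<Prod>\<beta>\<in>bessel_zeros n. \<beta>\<^sup>2 - z\<^sup>2)
     - z\<^sup>2 * (\<Sum>\<alpha>\<in>bessel_zeros n. \<alpha> * (\<Prod>\<beta>\<in>bessel_zeros n - {\<alpha>}. \<beta>\<^sup>2 - z\<^sup>2))
   = 1 / (bessel_coeff n n)\<^sup>2" (is "?X = _")
proof -
  let ?c = "bessel_coeff n n" and ?q = "\<Prod>\<beta>\<in>bessel_zeros n. [:-\<beta>, 1:]"
  have "2 * ?c\<^sup>2 * ?X = ?c\<^sup>2 * (z\<^sup>2 * (poly (pderiv ?q) z * poly ?q (-z) + poly (pderiv ?q) (-z) * poly ?q z)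
          + 2 * (poly ?q z * poly ?q (-z)))"
    unfolding poly_prod_linear_reflect poly_pderiv_prod_linear_reflect[OF finite_bessel_zeros]
    by (simp add: algebra_simps)
  also have "\<dots> = 2"
    using bessel_reflection_identity[of z n]
    by (subst (asm) (1 2 3 4 5 6) bessel_poly_factorization) (simp add: pderiv_smult algebra_simps power2_eq_square)
  finally have "?c\<^sup>2 * ?X = 1"
    by simp
  then show ?thesis
    using bessel_coeff_nonzero[of n n] by (simp add: field_simps)
qed

lemma fps_odd_geometric:
  fixes a :: "'a::comm_ring_1"
  shows "fps_of_poly [:-1, a\<^sup>2:] * Abs_fps (\<lambda>j. a ^ (2 * j + 1)) = fps_const (-a)"
proof (rule fps_ext)
  fix k
  let ?G = "Abs_fps (\<lambda>j. a ^ (2 * j + 1))"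
  have "fps_of_poly [:-1, a\<^sup>2:] = fps_X * fps_const (a\<^sup>2) - 1"
    by (simp add: fps_of_poly_pCons fps_of_poly_const mult.commute)
  then have G: "fps_of_poly [:-1, a\<^sup>2:] * ?G = fps_X * (fps_const (a\<^sup>2) * ?G) - ?G"
    by (simp only: left_diff_distrib mult.assoc mult_1_left)
  show "(fps_of_poly [:-1, a\<^sup>2:] * ?G) $ k = fps_const (-a) $ k"
    unfolding G by (cases k) (simp_all add: power2_eq_square algebra_simps)
qed

text \<open>The partial fraction expansion \<open>-S/T = \<Sum>\<^sub>\<alpha> \<alpha>/(1 - \<alpha>\<^sup>2 u)\<close>, expanded as power series.\<close>

lemma fps_odd_power_sums:
  fixes Z :: "'a::comm_ring_1 set"
  assumes "finite Z"
  shows "fps_of_poly (\<Prod>\<beta>\<in>Z. [:-1, \<beta>\<^sup>2:]) * Abs_fps (\<lambda>j. \<Sum>\<alpha>\<in>Z. \<alpha> ^ (2 * j + 1))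
           = - fps_of_poly (\<Sum>\<alpha>\<in>Z. smult \<alpha> (\<Prod>\<beta>\<in>Z - {\<alpha>}. [:-1, \<beta>\<^sup>2:]))"
proof -
  have "Abs_fps (\<lambda>j. \<Sum>\<alpha>\<in>Z. \<alpha> ^ (2 * j + 1)) = (\<Sum>\<alpha>\<in>Z. Abs_fps (\<lambda>j. \<alpha> ^ (2 * j + 1)))"
    by (rule fps_ext) (simp add: fps_sum_nth)
  moreover have "fps_of_poly (\<Prod>\<beta>\<in>Z. [:-1, \<beta>\<^sup>2:]) * Abs_fps (\<lambda>j. \<alpha> ^ (2 * j + 1))
                   = - fps_of_poly (smult \<alpha> (\<Prod>\<beta>\<in>Z - {\<alpha>}. [:-1, \<beta>\<^sup>2:]))"
    if "\<alpha> \<in> Z" for \<alpha>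
  proof -
    have "(\<Prod>\<beta>\<in>Z. [:-1, \<beta>\<^sup>2:]) = [:-1, \<alpha>\<^sup>2:] * (\<Prod>\<beta>\<in>Z - {\<alpha>}. [:-1, \<beta>\<^sup>2:])"
      using assms that by (rule prod.remove)
    then have "fps_of_poly (\<Prod>\<beta>\<in>Z. [:-1, \<beta>\<^sup>2:]) * Abs_fps (\<lambda>j. \<alpha> ^ (2 * j + 1))
        = (fps_of_poly [:-1, \<alpha>\<^sup>2:] * Abs_fps (\<lambda>j. \<alpha> ^ (2 * j + 1)))
            * fps_of_poly (\<Prod>\<beta>\<in>Z - {\<alpha>}. [:-1, \<beta>\<^sup>2:])"
      by (simp only: fps_of_poly_mult mult_ac)
    then show ?thesis
      unfolding fps_odd_geometric by (simp add: fps_of_poly_smult)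
  qed
  ultimately show ?thesis
    by (simp add: sum_distrib_left fps_of_poly_sum sum_negf[symmetric])
qed

lemma prod_sum_identity_reversed:
  fixes Z :: "complex set" and c :: complex
  assumes "finite Z" "Z \<noteq> {}"
    and identity: "\<And>z. (\<Prod>\<beta>\<in>Z. \<beta>\<^sup>2 - z\<^sup>2) - z\<^sup>2 * (\<Sum>\<alpha>\<in>Z. \<alpha> * (\<Prod>\<beta>\<in>Z - {\<alpha>}. \<beta>\<^sup>2 - z\<^sup>2)) = c"
  shows "(\<Prod>\<beta>\<in>Z. [:-1, \<beta>\<^sup>2:]) - (\<Sum>\<alpha>\<in>Z. smult \<alpha> (\<Prod>\<beta>\<in>Z - {\<alpha>}. [:-1, \<beta>\<^sup>2:]))
           = monom c (card Z)" (is "?T - ?S = ?M")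
proof -
  \<comment> \<open>Substituting \<open>z\<^sup>2 = 1/u\<close> gives the identity at every \<open>u \<noteq> 0\<close>, hence everywhere.\<close>
  have at_nonzero: "poly (?T - ?S - ?M) u = 0" if "u \<noteq> 0" for u
  proof -
    define z where "z = csqrt (1 / u)"
    have factor: "u * \<beta>\<^sup>2 - 1 = u * (\<beta>\<^sup>2 - z\<^sup>2)" for \<beta>
      using that by (simp add: z_def algebra_simps)
    obtain m where m: "card Z = Suc m"
      using assms by (metis card_gt_0_iff gr0_implies_Suc)
    have T: "poly ?T u = u ^ card Z * (\<Prod>\<beta>\<in>Z. \<beta>\<^sup>2 - z\<^sup>2)"
      by (simp add: poly_prod factor prod.distrib)
    have S: "poly ?S u = u ^ m * (\<Sum>\<alpha>\<in>Z. \<alpha> * (\<Prod>\<beta>\<in>Z - {\<alpha>}. \<beta>\<^sup>2 - z\<^sup>2))"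
      unfolding poly_sum sum_distrib_left
      by (rule sum.cong) (use assms m in \<open>simp_all add: poly_prod factor prod.distrib card_Diff_singleton\<close>)
    have "u * z\<^sup>2 = 1"
      using that by (simp add: z_def)
    then have "u ^ card Z * z\<^sup>2 = u ^ m"
      by (simp add: m mult.left_commute)
    then have "poly ?T u - poly ?S u
        = u ^ card Z * ((\<Prod>\<beta>\<in>Z. \<beta>\<^sup>2 - z\<^sup>2) - z\<^sup>2 * (\<Sum>\<alpha>\<in>Z. \<alpha> * (\<Prod>\<beta>\<in>Z - {\<alpha>}. \<beta>\<^sup>2 - z\<^sup>2)))"
      unfolding T S by (simp add: right_diff_distrib mult.assoc[symmetric])
    then show ?thesis
      by (simp add: identity poly_monom)
  qed
  have "poly ([:0, 1:] * (?T - ?S - ?M)) u = 0" for u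
    using at_nonzero[of u] by (cases "u = 0") simp_all
  then have "[:0, 1:] * (?T - ?S - ?M) = 0"
    using poly_all_0_iff_0 by blast
  then show ?thesis
    by simp
qed

lemma odd_power_sums_from_identity:
  fixes Z :: "complex set" and c :: complex
  assumes "finite Z" "Z \<noteq> {}"
    and "\<And>z. (\<Prod>\<beta>\<in>Z. \<beta>\<^sup>2 - z\<^sup>2) - z\<^sup>2 * (\<Sum>\<alpha>\<in>Z. \<alpha> * (\<Prod>\<beta>\<in>Z - {\<alpha>}. \<beta>\<^sup>2 - z\<^sup>2)) = c"
  shows "\<And>j. j < card Z \<Longrightarrow> (\<Sum>\<alpha>\<in>Z. \<alpha> ^ (2 * j + 1)) = (if j = 0 then -1 else 0)"
    and "(\<Sum>\<alpha>\<in>Z. \<alpha> ^ (2 * card Z + 1)) = (-1) ^ card Z * c"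
proof -
  let ?T = "fps_of_poly (\<Prod>\<beta>\<in>Z. [:-1, \<beta>\<^sup>2:])"
  let ?P = "Abs_fps (\<lambda>j. \<Sum>\<alpha>\<in>Z. \<alpha> ^ (2 * j + 1))"
  have product: "?T * (?P + 1) = fps_const c * fps_X ^ card Z"
    using fps_odd_power_sums[OF assms(1)] arg_cong[OF prod_sum_identity_reversed[OF assms], of fps_of_poly]
    by (simp add: distrib_left fps_of_poly_diff fps_of_poly_monom)
  have T0: "?T $ 0 = (-1) ^ card Z"
    by (simp add: poly_0_coeff_0[symmetric] poly_prod)
  then have "?P + 1 = inverse ?T * (?T * (?P + 1))"
    using inverse_mult_eq_1[of ?T] by (simp add: mult.assoc[symmetric])
  also have "\<dots> = fps_X ^ card Z * (fps_const c * inverse ?T)"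
    unfolding product by (simp add: mult_ac)
  finally have coeff: "(?P + 1) $ j = (if j < card Z then 0 else c * inverse (?T $ 0))" if "j \<le> card Z" for j
    using that by (simp add: fps_X_power_mult_nth)
  show "(\<Sum>\<alpha>\<in>Z. \<alpha> ^ (2 * j + 1)) = (if j = 0 then -1 else 0)" if "j < card Z" for j
    using coeff[of j] that by (cases "j = 0") (auto simp: eq_neg_iff_add_eq_0)
  have "card Z \<noteq> 0"
    using assms by simp
  then show "(\<Sum>\<alpha>\<in>Z. \<alpha> ^ (2 * card Z + 1)) = (-1) ^ card Z * c"
    using coeff[of "card Z"] unfolding T0 by (simp add: power_inverse[symmetric] mult.commute)
qed

lemma bessel_zeros_odd_power_sums:
  assumes "n \<ge> 1"
  shows "\<And>j. j < n \<Longrightarrow> (\<Sum>\<alpha>\<in>bessel_zeros n. \<alpha> ^ (2 * j + 1)) = (if j = 0 then -1 else 0)"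
    and "(\<Sum>\<alpha>\<in>bessel_zeros n. \<alpha> ^ (2 * n + 1)) = (-1) ^ n / (bessel_coeff n n)\<^sup>2"
proof -
  have "bessel_zeros n \<noteq> {}"
    using assms card_bessel_zeros[of n] by auto
  note sums = odd_power_sums_from_identity[OF finite_bessel_zeros this bessel_zeros_identity]
  show "(\<Sum>\<alpha>\<in>bessel_zeros n. \<alpha> ^ (2 * j + 1)) = (if j = 0 then -1 else 0)" if "j < n" for j
    using sums(1)[of j] that by (simp add: card_bessel_zeros)
  show "(\<Sum>\<alpha>\<in>bessel_zeros n. \<alpha> ^ (2 * n + 1)) = (-1) ^ n / (bessel_coeff n n)\<^sup>2"
    using sums(2) by (simp add: card_bessel_zeros)
qed

lemma sum_shifted_power_diff:
  fixes Z :: "'a::field set"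
  shows "(\<Sum>\<alpha>\<in>Z. (1 - \<alpha> / 2) ^ m - (1 + \<alpha> / 2) ^ m)
           = (\<Sum>i\<le>m. of_nat (m choose i) * ((-1) ^ i - 1) / 2 ^ i * (\<Sum>\<alpha>\<in>Z. \<alpha> ^ i))"
proof -
  have "(1 - \<alpha> / 2) ^ m - (1 + \<alpha> / 2) ^ m
          = (\<Sum>i\<le>m. of_nat (m choose i) * ((-1) ^ i - 1) / 2 ^ i * \<alpha> ^ i)" for \<alpha> :: 'a
    using binomial_ring[of "-\<alpha>/2" 1 m] binomial_ring[of "\<alpha>/2" 1 m]
    by (simp add: sum_subtractf[symmetric] power_divide power_minus' algebra_simps diff_divide_distrib)
  then show ?thesis
    by (simp add: sum_distrib_left sum.swap[of _ Z])
qed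

lemma A_sum_eq:
  assumes "n \<ge> 1" "1 \<le> m" "m \<le> 2 * n + 1"
  shows "A_sum m n = of_nat m - (if m = 2 * n + 1 then (-1) ^ n / ((bessel_coeff n n)\<^sup>2 * 4 ^ n) else 0)"
proof -
  define t where "t i = of_nat (m choose i) * ((-1) ^ i - 1) / 2 ^ i * (\<Sum>\<alpha>\<in>bessel_zeros n. \<alpha> ^ i)" for i
  have vanish: "t i = 0" if "i \<le> m" "i \<noteq> 1" "i \<noteq> 2 * n + 1" for i
  proof (cases "even i")
    case False
    then obtain j where "i = 2 * j + 1"
      by (metis oddE)
    with that assms show ?thesis
      using bessel_zeros_odd_power_sums(1)[of n j] by (simp add: t_def)
  qed (simp add: t_def)
  have t_1: "t 1 = of_nat m"
    using assms bessel_zeros_odd_power_sums(1)[of n 0] by (simp add: t_def)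
  have t_top: "t (2 * n + 1) = - ((-1) ^ n / ((bessel_coeff n n)\<^sup>2 * 4 ^ n))" if "m = 2 * n + 1"
  proof -
    have "(2::complex) ^ (2 * n + 1) = 2 * 4 ^ n"
      by (simp add: power_mult)
    then show ?thesis
      using that bessel_zeros_odd_power_sums(2)[OF assms(1)] by (simp add: t_def)
  qed
  have "A_sum m n = (\<Sum>i\<le>m. t i)"
    unfolding A_sum_def t_def by (rule sum_shifted_power_diff)
  also have "\<dots> = (\<Sum>i\<in>{..m} \<inter> {1, 2 * n + 1}. t i)"
    by (rule sum.mono_neutral_right) (auto intro: vanish)
  also have "\<dots> = t 1 + (if m = 2 * n + 1 then t (2 * n + 1) else 0)"
    using assms by (cases "m = 2 * n + 1") (simp_all add: insert_absorb Int_insert_right)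
  finally show ?thesis
    using t_1 t_top by simp
qed

lemma bessel_coeff_diag_sq:
  "(bessel_coeff n n)\<^sup>2 * 4 ^ n = (of_nat (fact (2 * n)))\<^sup>2 / (of_nat (fact n))\<^sup>2"
proof -
  have "((2::complex) ^ n)\<^sup>2 = 4 ^ n"
    unfolding power2_eq_square power_mult_distrib[symmetric] by simp
  then show ?thesis
    by (simp add: bessel_coeff_def power_divide power_mult_distrib mult_2)
qed

theorem proposition1:
  fixes n :: nat
  assumes "n \<ge> 1"
  shows "(\<forall>m. 1 \<le> m \<and> m \<le> 2*n \<longrightarrow> of_nat m - A_sum m n = 0) \<and>
         of_nat (2*n+1) - A_sum (2*n+1) n
           = (-1) ^ n * (of_nat (fact n))^2 / (of_nat (fact (2*n)))^2"
  using assms by (simp add: A_sum_eq bessel_coeff_diag_sq)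

end
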